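(* Let $G=(V,E)$ be a finite simple graph with at least one edge and no isolated vertices, let $\overline{\deg}=\frac1{|V|}\sum_{v\in V}\deg v$ be its average degree, let $\lambda_N$ be the largest eigenvalue of its normalized Laplacian (so $\lambda_N>1$), and let $d\ge0$ be an integer. Then \[ \chi^d(G)\;\ge\;\frac{\lambda_N}{\lambda_N-1+d/\overline{\deg}}. \] Moreover, the bound is sharp: there exist graphs (and values of $d$) for which equality holds.
   Context: For a graph $G$ with adjacency matrix $A$ ($A_{v,w}=1$ if $v\sim w$, else $0$) and degree matrix $D=\mathrm{diag}(\deg v)$, the normalized Laplacian is $L=\mathrm{Id}-D^{-1}A$, with real eigenvalues $0=\lambda_1\le\dots\le\lambda_N$. For an integer $d\ge0$, a vertex coloring $V\to\{1,\dots,k\}$ is $d$-improper if every vertex has at most $d$ neighbors with the same color as itself; $\chi^d(G)$ is the least $k$ admitting a $d$-improper $k$-coloring. *)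

theory Defs
  imports Complex_Main
begin

definition simple_graph :: "'a set \<Rightarrow> ('a \<Rightarrow> 'a \<Rightarrow> bool) \<Rightarrow> bool" where
  "simple_graph V E \<longleftrightarrow> finite V \<and> (\<forall>v w. E v w \<longrightarrow> E w v)
     \<and> (\<forall>v. \<not> E v v) \<and> (\<forall>v w. E v w \<longrightarrow> v \<in> V \<and> w \<in> V)"

definition neighbours :: "'a set \<Rightarrow> ('a \<Rightarrow> 'a \<Rightarrow> bool) \<Rightarrow> 'a \<Rightarrow> 'a set" where
  "neighbours V E v = {w \<in> V. E v w}"

definition gdeg :: "'a set \<Rightarrow> ('a \<Rightarrow> 'a \<Rightarrow> bool) \<Rightarrow> 'a \<Rightarrow> nat" where
  "gdeg V E v = card (neighbours V E v)"

definition has_edge :: "'a set \<Rightarrow> ('a \<Rightarrow> 'a \<Rightarrow> bool) \<Rightarrow> bool" where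
  "has_edge V E \<longleftrightarrow> (\<exists>v\<in>V. \<exists>w\<in>V. E v w)"

definition no_isolated :: "'a set \<Rightarrow> ('a \<Rightarrow> 'a \<Rightarrow> bool) \<Rightarrow> bool" where
  "no_isolated V E \<longleftrightarrow> (\<forall>v\<in>V. gdeg V E v > 0)"

definition avg_deg :: "'a set \<Rightarrow> ('a \<Rightarrow> 'a \<Rightarrow> bool) \<Rightarrow> real" where
  "avg_deg V E = (\<Sum>v\<in>V. real (gdeg V E v)) / real (card V)"

definition norm_laplacian :: "'a set \<Rightarrow> ('a \<Rightarrow> 'a \<Rightarrow> bool) \<Rightarrow> ('a \<Rightarrow> real) \<Rightarrow> 'a \<Rightarrow> real" where
  "norm_laplacian V E f v =
     f v - (\<Sum>w\<in>V. (if E v w then 1 else 0) * f w) / real (gdeg V E v)"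

text \<open>Eigenvalues of L (all eigenvalues of L are real, with real eigenvectors).\<close>
definition laplacian_eigenvalue :: "'a set \<Rightarrow> ('a \<Rightarrow> 'a \<Rightarrow> bool) \<Rightarrow> real \<Rightarrow> bool" where
  "laplacian_eigenvalue V E mu \<longleftrightarrow>
     (\<exists>f. (\<exists>v\<in>V. f v \<noteq> 0) \<and> (\<forall>v\<in>V. norm_laplacian V E f v = mu * f v))"

definition lambda_max :: "'a set \<Rightarrow> ('a \<Rightarrow> 'a \<Rightarrow> bool) \<Rightarrow> real" where
  "lambda_max V E = Max {mu. laplacian_eigenvalue V E mu}"

definition improper_coloring :: "'a set \<Rightarrow> ('a \<Rightarrow> 'a \<Rightarrow> bool) \<Rightarrow> nat \<Rightarrow> nat \<Rightarrow> ('a \<Rightarrow> nat) \<Rightarrow> bool" where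
  "improper_coloring V E d k c \<longleftrightarrow>
     (\<forall>v\<in>V. c v \<in> {1..k}) \<and> (\<forall>v\<in>V. card {w \<in> V. E v w \<and> c w = c v} \<le> d)"

definition improper_chromatic :: "'a set \<Rightarrow> ('a \<Rightarrow> 'a \<Rightarrow> bool) \<Rightarrow> nat \<Rightarrow> nat" where
  "improper_chromatic V E d = (LEAST k. \<exists>c. improper_coloring V E d k c)"

end

theory Submission
  imports Defs "HOL-Analysis.Analysis"
begin

text \<open>Write \<lambda> for the largest eigenvalue and, for f : V \<rightarrow> \<real>, let the energy of f be
  \<Sum>(f v - f w)^2 over ordered pairs of adjacent vertices and its mass \<Sum> deg v * (f v)^2.
  A maximiser of the energy on the compact sphere of unit mass solves the eigen-equation of the
  normalized Laplacian, hence energy f \<le> 2 \<lambda> * mass f for every f. (The maximum \<lambda> exists: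
  eigenfunctions of distinct eigenvalues are orthogonal for the degree-weighted inner product,
  so there are at most |V| eigenvalues.)
  Given a d-improper colouring with k colours, test this inequality on the indicator functions
  of the colour classes, centred at their degree-weighted means, and sum over the classes. Since
  every vertex has at most d neighbours of its own colour, the energies add up to at least
  2 (vol V - |V| d); by Cauchy-Schwarz the masses add up to at most vol V (1 - 1/k). As
  vol V = |V| * avg deg, this rearranges to the bound. The complete graph K_n with d = 0 attains
  it: its largest eigenvalue is n/(n - 1) and its chromatic number is n.\<close>

lemma compact_PiE_UNIV:
  fixes S :: "'a \<Rightarrow> 'b::topological_space set"
  assumes "\<And>i. compact (S i)"
  shows "compact (Pi\<^sub>E UNIV S)"
proof -
  have "compactin (product_topology (\<lambda>i. euclidean) UNIV) (Pi\<^sub>E UNIV S)"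
    using assms by (simp add: compactin_PiE)
  then show ?thesis by (simp add: euclidean_product_topology)
qed

lemma linear_coeff_eq_0_if_quadratic_nonpos:
  fixes a b :: real
  assumes "\<And>t. 2 * t * b + t\<^sup>2 * a \<le> 0"
  shows "b = 0"
proof (rule ccontr)
  assume "b \<noteq> 0"
  define s where "s = \<bar>a\<bar> + 1"
  have "s > 0" "2 * s + a > 0" by (auto simp: s_def abs_if)
  then have "2 * (b / s) * b + (b / s)\<^sup>2 * a = b\<^sup>2 / s\<^sup>2 * (2 * s + a)"
    by (simp add: field_simps power2_eq_square)
  also have "\<dots> > 0"
    using \<open>b \<noteq> 0\<close> \<open>s > 0\<close> \<open>2 * s + a > 0\<close> by simp
  finally show False using assms[of "b / s"] by linarith
qed

lemma improper_coloring_card: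
  assumes "simple_graph V E"
  shows "\<exists>c. improper_coloring V E d (card V) c"
proof -
  have "finite V" using assms by (simp add: simple_graph_def)
  then obtain h where h: "bij_betw h V {0..<card V}"
    using ex_bij_betw_finite_nat by blast
  have "card {w \<in> V. E v w \<and> Suc (h w) = Suc (h v)} = 0" if "v \<in> V" for v
  proof -
    have "w = v" if "w \<in> V" "h w = h v" for w
      using inj_onD[OF bij_betw_imp_inj_on[OF h]] that \<open>v \<in> V\<close> by blast
    then have "{w \<in> V. E v w \<and> Suc (h w) = Suc (h v)} = {}"
      using assms unfolding simple_graph_def by blast
    then show ?thesis by (simp only: card.empty)
  qed
  moreover have "Suc (h v) \<in> {1..card V}" if "v \<in> V" for v
    using bij_betwE[OF h] that by fastforce
  ultimately have "improper_coloring V E d (card V) (\<lambda>v. Suc (h v))"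
    by (simp add: improper_coloring_def)
  then show ?thesis by blast
qed

lemma improper_chromatic_le_card:
  assumes "simple_graph V E"
  shows "improper_chromatic V E d \<le> card V"
  unfolding improper_chromatic_def by (rule Least_le) (rule improper_coloring_card[OF assms])

lemma improper_coloring_improper_chromatic:
  assumes "simple_graph V E"
  shows "\<exists>c. improper_coloring V E d (improper_chromatic V E d) c"
  unfolding improper_chromatic_def by (rule LeastI_ex) (use improper_coloring_card[OF assms] in blast)

lemma le_colours_if_spectral_ineq:
  fixes lam avg d k :: real
  assumes "avg > 0" and "k \<ge> 1" and "lam \<ge> 0" and "avg - d \<le> lam * (avg - avg / k)"
  shows "lam / (lam - 1 + d / avg) \<le> k"
proof -
  have "k / avg * (avg - d) \<le> k / avg * (lam * (avg - avg / k))"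
    using assms by (intro mult_left_mono) auto
  then have "lam \<le> k * (lam - 1 + d / avg)"
    using assms by (simp add: field_simps)
  show ?thesis
  proof (cases "lam - 1 + d / avg > 0")
    case True
    with \<open>lam \<le> k * (lam - 1 + d / avg)\<close> show ?thesis by (simp add: pos_divide_le_eq)
  next
    case False
    then have "lam / (lam - 1 + d / avg) \<le> 0" using assms(3) by (simp add: divide_nonneg_nonpos)
    then show ?thesis using assms(2) by linarith
  qed
qed

section \<open>The Rayleigh bound for the largest eigenvalue\<close>

locale nonisolated_graph =
  fixes V :: "'a set" and E :: "'a \<Rightarrow> 'a \<Rightarrow> bool"
  assumes simple: "simple_graph V E" and no_isolated: "no_isolated V E"
begin

definition adj :: "'a \<Rightarrow> 'a \<Rightarrow> real" where
  "adj v w = of_bool (E v w)"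

definition vdeg :: "'a \<Rightarrow> real" where
  "vdeg v = real (gdeg V E v)"

definition vol :: real where
  "vol = (\<Sum>v\<in>V. vdeg v)"

text \<open>Each edge is counted twice, once per orientation.\<close>

definition energy_form :: "('a \<Rightarrow> real) \<Rightarrow> ('a \<Rightarrow> real) \<Rightarrow> real" where
  "energy_form f g = (\<Sum>v\<in>V. \<Sum>w\<in>V. adj v w * (f v - f w) * (g v - g w))"

abbreviation energy :: "('a \<Rightarrow> real) \<Rightarrow> real" where
  "energy f \<equiv> energy_form f f"

definition deg_inner :: "('a \<Rightarrow> real) \<Rightarrow> ('a \<Rightarrow> real) \<Rightarrow> real" where
  "deg_inner f g = (\<Sum>v\<in>V. vdeg v * f v * g v)"

abbreviation mass :: "('a \<Rightarrow> real) \<Rightarrow> real" where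
  "mass f \<equiv> deg_inner f f"

definition eigen_equation :: "real \<Rightarrow> ('a \<Rightarrow> real) \<Rightarrow> bool" where
  "eigen_equation \<mu> f \<longleftrightarrow>
     (\<forall>v\<in>V. vdeg v * f v - (\<Sum>w\<in>V. adj v w * f w) = \<mu> * (vdeg v * f v))"

lemma finite_V: "finite V"
  using simple by (simp add: simple_graph_def)

lemma adj_commute: "adj v w = adj w v"
  using simple by (auto simp: simple_graph_def adj_def)

lemma vdeg_ge_1: "v \<in> V \<Longrightarrow> vdeg v \<ge> 1"
  using no_isolated by (simp add: no_isolated_def vdeg_def Suc_le_eq)

lemma vdeg_eq_sum_adj: "vdeg v = (\<Sum>w\<in>V. adj v w)"
  using finite_V by (simp add: vdeg_def gdeg_def neighbours_def adj_def sum.If_cases Int_def)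

lemma deg_inner_commute: "deg_inner f g = deg_inner g f"
  unfolding deg_inner_def by (simp add: ac_simps)

lemma energy_form_commute: "energy_form f g = energy_form g f"
  unfolding energy_form_def by (simp add: ac_simps)

lemma deg_inner_cong:
  "(\<And>v. v \<in> V \<Longrightarrow> f v = f' v) \<Longrightarrow> (\<And>v. v \<in> V \<Longrightarrow> g v = g' v) \<Longrightarrow> deg_inner f g = deg_inner f' g'"
  unfolding deg_inner_def by simp

lemma energy_form_cong:
  "(\<And>v. v \<in> V \<Longrightarrow> f v = f' v) \<Longrightarrow> (\<And>v. v \<in> V \<Longrightarrow> g v = g' v) \<Longrightarrow>
   energy_form f g = energy_form f' g'"
  unfolding energy_form_def by simp

lemma energy_nonneg: "energy f \<ge> 0"
  unfolding energy_form_def adj_def by (intro sum_nonneg) simp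

lemma sq_le_mass: "v \<in> V \<Longrightarrow> (f v)\<^sup>2 \<le> mass f"
proof -
  assume v: "v \<in> V"
  have "(f v)\<^sup>2 \<le> vdeg v * (f v)\<^sup>2"
    using mult_right_mono[OF vdeg_ge_1[OF v], of "(f v)\<^sup>2"] by simp
  also have "\<dots> = vdeg v * f v * f v"
    by (simp add: power2_eq_square)
  also have "\<dots> \<le> mass f"
    unfolding deg_inner_def using v finite_V vdeg_ge_1
    by (intro member_le_sum) (simp_all add: mult.assoc order.trans[OF zero_le_one])
  finally show ?thesis .
qed

lemma mass_nonneg: "mass f \<ge> 0"
  unfolding deg_inner_def using vdeg_ge_1
  by (intro sum_nonneg) (simp add: mult.assoc order.trans[OF zero_le_one])

lemma mass_scale: "mass (\<lambda>v. c * f v) = c\<^sup>2 * mass f"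
  unfolding deg_inner_def by (simp add: sum_distrib_left power2_eq_square ac_simps)

lemma energy_scale: "energy (\<lambda>v. c * f v) = c\<^sup>2 * energy f"
  unfolding energy_form_def by (simp add: sum_distrib_left power2_eq_square algebra_simps)

lemma norm_laplacian_eq_iff:
  assumes "v \<in> V"
  shows "norm_laplacian V E f v = \<mu> * f v \<longleftrightarrow>
         vdeg v * f v - (\<Sum>w\<in>V. adj v w * f w) = \<mu> * (vdeg v * f v)"
proof -
  have "vdeg v > 0" using vdeg_ge_1[OF assms] by linarith
  have "norm_laplacian V E f v = f v - (\<Sum>w\<in>V. adj v w * f w) / vdeg v"
    by (simp add: norm_laplacian_def adj_def vdeg_def of_bool_def)
  also have "\<dots> = \<mu> * f v \<longleftrightarrow> vdeg v * f v - (\<Sum>w\<in>V. adj v w * f w) = \<mu> * (vdeg v * f v)"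
    using \<open>vdeg v > 0\<close> by (simp add: field_simps)
  finally show ?thesis .
qed

lemma laplacian_eigenvalue_iff:
  "laplacian_eigenvalue V E \<mu> \<longleftrightarrow> (\<exists>f. eigen_equation \<mu> f \<and> (\<exists>v\<in>V. f v \<noteq> 0))"
  by (simp add: laplacian_eigenvalue_def eigen_equation_def norm_laplacian_eq_iff conj_commute)

lemma energy_form_eq_laplacian:
  "energy_form f g = 2 * (\<Sum>v\<in>V. g v * (vdeg v * f v - (\<Sum>w\<in>V. adj v w * f w)))"
proof -
  define P where "P = (\<Sum>v\<in>V. \<Sum>w\<in>V. adj v w * (f v - f w) * g v)"
  have "energy_form f g = (\<Sum>v\<in>V. \<Sum>w\<in>V. adj v w * (f v - f w) * g v - adj v w * (f v - f w) * g w)"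
    unfolding energy_form_def by (intro sum.cong refl) (rule right_diff_distrib)
  also have "\<dots> = P - (\<Sum>v\<in>V. \<Sum>w\<in>V. adj v w * (f v - f w) * g w)"
    unfolding P_def by (simp only: sum_subtractf)
  also have "(\<Sum>v\<in>V. \<Sum>w\<in>V. adj v w * (f v - f w) * g w) = (\<Sum>w\<in>V. \<Sum>v\<in>V. adj v w * (f v - f w) * g w)"
    by (rule sum.swap)
  also have "\<dots> = - P"
    unfolding P_def by (simp add: adj_commute sum_negf[symmetric] algebra_simps)
  also have "P = (\<Sum>v\<in>V. g v * (vdeg v * f v - (\<Sum>w\<in>V. adj v w * f w)))"
    unfolding P_def vdeg_eq_sum_adj
    by (intro sum.cong refl) (simp add: sum_distrib_left sum_distrib_right sum_subtractf[symmetric] algebra_simps)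
  finally show ?thesis by simp
qed

lemma energy_form_eigen:
  assumes "eigen_equation \<mu> f"
  shows "energy_form f g = 2 * \<mu> * deg_inner f g"
proof -
  have "energy_form f g = 2 * (\<Sum>v\<in>V. g v * (\<mu> * (vdeg v * f v)))"
    using assms by (simp add: energy_form_eq_laplacian eigen_equation_def)
  then show ?thesis by (simp add: deg_inner_def sum_distrib_left ac_simps)
qed

lemma eigen_orthogonal:
  assumes "eigen_equation \<mu> f" "eigen_equation \<nu> g" "\<mu> \<noteq> \<nu>"
  shows "deg_inner f g = 0"
proof -
  have "2 * \<mu> * deg_inner f g = 2 * \<nu> * deg_inner f g"
    using energy_form_eigen[OF assms(1), of g] energy_form_eigen[OF assms(2), of f]
    by (simp add: energy_form_commute deg_inner_commute)
  then show ?thesis using assms(3) by simp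
qed

lemma energy_add_scaled:
  "energy (\<lambda>v. f v + t * u v) = energy f + 2 * t * energy_form f u + t\<^sup>2 * energy u"
proof -
  have "energy (\<lambda>v. f v + t * u v) = (\<Sum>v\<in>V. \<Sum>w\<in>V.
          adj v w * (f v - f w) * (f v - f w) + 2 * t * (adj v w * (f v - f w) * (u v - u w))
          + t\<^sup>2 * (adj v w * (u v - u w) * (u v - u w)))"
    unfolding energy_form_def by (intro sum.cong refl) (simp add: power2_eq_square algebra_simps)
  then show ?thesis
    by (simp add: energy_form_def sum.distrib sum_distrib_left)
qed

lemma mass_add_scaled:
  "mass (\<lambda>v. f v + t * u v) = mass f + 2 * t * deg_inner f u + t\<^sup>2 * mass u"
proof -
  have "mass (\<lambda>v. f v + t * u v) = (\<Sum>v\<in>V.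
          vdeg v * f v * f v + 2 * t * (vdeg v * f v * u v) + t\<^sup>2 * (vdeg v * u v * u v))"
    unfolding deg_inner_def by (intro sum.cong refl) (simp add: power2_eq_square algebra_simps)
  then show ?thesis
    by (simp add: deg_inner_def sum.distrib sum_distrib_left)
qed

lemma deg_inner_indicator:
  assumes "x \<in> V"
  shows "deg_inner f (\<lambda>v. of_bool (v = x)) = vdeg x * f x"
proof -
  have "V \<inter> {v. v = x} = {x}" using assms by auto
  then show ?thesis using finite_V by (simp add: deg_inner_def)
qed

lemma energy_form_indicator:
  assumes "x \<in> V"
  shows "energy_form f (\<lambda>v. of_bool (v = x)) = 2 * (vdeg x * f x - (\<Sum>w\<in>V. adj x w * f w))"
proof -
  have "V \<inter> {v. v = x} = {x}" using assms by auto
  then show ?thesis using finite_V by (simp add: energy_form_eq_laplacian)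
qed

lemma eigen_equation_if_maximizer:
  assumes unit: "mass f = 1" and max: "\<And>g. energy g \<le> energy f * mass g"
  shows "eigen_equation (energy f / 2) f"
  unfolding eigen_equation_def
proof
  fix x assume x: "x \<in> V"
  define u where "u = (\<lambda>v. of_bool (v = x) :: real)"
  define m where "m = energy f"
  have "2 * t * (energy_form f u - m * deg_inner f u) + t\<^sup>2 * (energy u - m * mass u) \<le> 0" for t
    using max[of "\<lambda>v. f v + t * u v"] unit
    unfolding energy_add_scaled mass_add_scaled m_def by (simp add: algebra_simps)
  then have "energy_form f u = m * deg_inner f u"
    using linear_coeff_eq_0_if_quadratic_nonpos by fastforce
  then show "vdeg x * f x - (\<Sum>w\<in>V. adj x w * f w) = m / 2 * (vdeg x * f x)"
    unfolding u_def energy_form_indicator[OF x] deg_inner_indicator[OF x] by simp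
qed

lemma exists_unit_mass_rescaling:
  assumes "mass g > 0"
  obtains h where "mass h = 1" "energy h = energy g / mass g" "\<And>v. v \<notin> V \<Longrightarrow> h v = 0"
proof
  define c where "c = 1 / sqrt (mass g)"
  define h where "h = (\<lambda>v. if v \<in> V then c * g v else 0)"
  have c2: "c\<^sup>2 = 1 / mass g"
    using assms by (simp add: c_def power_divide)
  have "mass h = mass (\<lambda>v. c * g v)" "energy h = energy (\<lambda>v. c * g v)"
    by (auto simp: h_def intro: deg_inner_cong energy_form_cong)
  then show "mass h = 1" "energy h = energy g / mass g"
    using c2 assms by (simp_all add: mass_scale energy_scale)
  show "\<And>v. v \<notin> V \<Longrightarrow> h v = 0" by (simp add: h_def)
qed

text \<open>Functions are total on the vertex type, so they are pinned to 0 outside V to make the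
  unit sphere compact.\<close>

lemma compact_unit_mass:
  "compact {f. mass f = 1 \<and> (\<forall>v. v \<notin> V \<longrightarrow> f v = 0)}"
proof -
  define S where "S = (\<lambda>v. if v \<in> V then {-1..1} else {0 :: real})"
  have "{f. mass f = 1 \<and> (\<forall>v. v \<notin> V \<longrightarrow> f v = 0)} = Pi\<^sub>E UNIV S \<inter> {f. mass f = 1}"
  proof (intro equalityI subsetI)
    fix f assume f: "f \<in> {f. mass f = 1 \<and> (\<forall>v. v \<notin> V \<longrightarrow> f v = 0)}"
    have "\<bar>f v\<bar> \<le> 1" if "v \<in> V" for v
      using sq_le_mass[OF that, of f] f by (simp add: abs_square_le_1)
    with f show "f \<in> Pi\<^sub>E UNIV S \<inter> {f. mass f = 1}"
      by (auto simp: S_def PiE_iff abs_le_iff)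
  next
    fix f assume "f \<in> Pi\<^sub>E UNIV S \<inter> {f. mass f = 1}"
    then have "mass f = 1" and "f v \<in> S v" for v by (auto simp: PiE_iff)
    moreover have "f v = 0" if "v \<notin> V" for v
      using \<open>f v \<in> S v\<close> that by (simp add: S_def)
    ultimately show "f \<in> {f. mass f = 1 \<and> (\<forall>v. v \<notin> V \<longrightarrow> f v = 0)}" by simp
  qed
  moreover have "continuous_on UNIV (\<lambda>f. mass f)"
    unfolding deg_inner_def
    by (intro continuous_intros continuous_on_product_then_coordinatewise continuous_on_id)
  moreover have "compact (Pi\<^sub>E UNIV S)"
    by (rule compact_PiE_UNIV) (simp add: S_def)
  ultimately show ?thesis
    by (simp add: compact_Int_closed closed_Collect_eq)
qed

lemma exists_energy_maximizer:
  assumes "V \<noteq> {}"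
  obtains f where "mass f = 1" "\<And>g. energy g \<le> energy f * mass g"
proof -
  define K where "K = {f. mass f = 1 \<and> (\<forall>v. v \<notin> V \<longrightarrow> f v = 0)}"
  obtain x where x: "x \<in> V" using assms by blast
  have "mass (\<lambda>v. of_bool (v = x)) > 0"
    using deg_inner_indicator[OF x] vdeg_ge_1[OF x] by simp
  then obtain h where "mass h = 1" "\<And>v. v \<notin> V \<Longrightarrow> h v = 0"
    using exists_unit_mass_rescaling by metis
  then have "K \<noteq> {}" by (auto simp: K_def)
  moreover have "continuous_on K energy"
    unfolding energy_form_def
    by (intro continuous_intros continuous_on_product_then_coordinatewise continuous_on_id)
  ultimately obtain f where "f \<in> K" and f_max: "\<And>h. h \<in> K \<Longrightarrow> energy h \<le> energy f"
    using continuous_attains_sup[OF compact_unit_mass[folded K_def]] by blast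
  have "energy g \<le> energy f * mass g" for g
  proof (cases "mass g = 0")
    case True
    then have "g v = 0" if "v \<in> V" for v
      using sq_le_mass[OF that, of g] by simp
    then have "energy g = energy (\<lambda>_. 0)"
      by (intro energy_form_cong) auto
    then show ?thesis using True by (simp add: energy_form_def)
  next
    case False
    then obtain h where "mass h = 1" "energy h = energy g / mass g" "\<And>v. v \<notin> V \<Longrightarrow> h v = 0"
      using exists_unit_mass_rescaling mass_nonneg by (metis order_le_less)
    then have "energy g / mass g \<le> energy f"
      using f_max[of h] by (simp add: K_def)
    then show ?thesis
      using False mass_nonneg[of g] by (simp add: divide_le_eq mult.commute)
  qed
  with \<open>f \<in> K\<close> show thesis by (intro that) (auto simp: K_def)
qed

definition orthonormal :: "'i set \<Rightarrow> ('i \<Rightarrow> 'a \<Rightarrow> real) \<Rightarrow> bool" where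
  "orthonormal F u \<longleftrightarrow> (\<forall>i\<in>F. \<forall>j\<in>F. deg_inner (u i) (u j) = of_bool (i = j))"

lemma deg_inner_sum_right:
  "deg_inner f (\<lambda>v. \<Sum>i\<in>F. c i * u i v) = (\<Sum>i\<in>F. c i * deg_inner f (u i))"
  unfolding deg_inner_def sum_distrib_left by (subst sum.swap) (simp add: ac_simps)

lemma mass_diff: "mass (\<lambda>v. f v - g v) = mass f - 2 * deg_inner f g + mass g"
proof -
  have "mass (\<lambda>v. f v - g v) = (\<Sum>v\<in>V. vdeg v * f v * f v - 2 * (vdeg v * f v * g v) + vdeg v * g v * g v)"
    unfolding deg_inner_def by (intro sum.cong refl) (simp add: algebra_simps)
  then show ?thesis
    by (simp add: deg_inner_def sum.distrib sum_subtractf sum_distrib_left)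
qed

lemma bessel_inequality:
  assumes "finite F" and "orthonormal F u"
  shows "(\<Sum>i\<in>F. (deg_inner f (u i))\<^sup>2) \<le> mass f"
proof -
  define c where "c i = deg_inner f (u i)" for i
  define b where "b = (\<lambda>v. \<Sum>i\<in>F. c i * u i v)"
  have b_u: "deg_inner b (u j) = c j" if "j \<in> F" for j
  proof -
    have "deg_inner b (u j) = deg_inner (u j) b"
      by (rule deg_inner_commute)
    also have "\<dots> = (\<Sum>i\<in>F. c i * deg_inner (u j) (u i))"
      unfolding b_def by (rule deg_inner_sum_right)
    also have "\<dots> = (\<Sum>i\<in>F. c i * of_bool (i = j))"
      using assms(2) that by (intro sum.cong) (auto simp: orthonormal_def)
    also have "\<dots> = c j"
      using assms(1) that by simp
    finally show ?thesis .
  qed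
  have "deg_inner f b = (\<Sum>i\<in>F. (c i)\<^sup>2)" "mass b = (\<Sum>i\<in>F. (c i)\<^sup>2)"
    using b_u by (simp_all add: b_def deg_inner_sum_right c_def power2_eq_square)
  moreover have "0 \<le> mass (\<lambda>v. f v - b v)" by (rule mass_nonneg)
  ultimately show ?thesis by (simp add: mass_diff c_def)
qed

lemma card_orthonormal_le:
  assumes "finite F" and "orthonormal F u"
  shows "card F \<le> card V"
proof -
  have pointwise: "(\<Sum>i\<in>F. vdeg x * (u i x)\<^sup>2) \<le> 1" if x: "x \<in> V" for x
  proof -
    have "vdeg x * (\<Sum>i\<in>F. vdeg x * (u i x)\<^sup>2) = (\<Sum>i\<in>F. (deg_inner (\<lambda>v. of_bool (v = x)) (u i))\<^sup>2)"
      by (simp add: deg_inner_commute[of "\<lambda>v. of_bool (v = x)"] deg_inner_indicator[OF x]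
          sum_distrib_left power2_eq_square ac_simps)
    also have "\<dots> \<le> vdeg x"
      using bessel_inequality[OF assms, of "\<lambda>v. of_bool (v = x)"]
        deg_inner_indicator[OF x, of "\<lambda>v. of_bool (v = x)"] by simp
    finally show ?thesis using vdeg_ge_1[OF x] by simp
  qed
  have "real (card F) = (\<Sum>i\<in>F. mass (u i))"
    using assms(2) by (simp add: orthonormal_def)
  also have "\<dots> = (\<Sum>x\<in>V. \<Sum>i\<in>F. vdeg x * (u i x)\<^sup>2)"
    unfolding deg_inner_def by (subst sum.swap) (simp add: power2_eq_square mult.assoc)
  also have "\<dots> \<le> real (card V)"
    using sum_mono[of V _ "\<lambda>_. 1", OF pointwise] by simp
  finally show ?thesis by simp
qed

lemma eigen_equation_scale:
  assumes "eigen_equation \<mu> f"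
  shows "eigen_equation \<mu> (\<lambda>v. c * f v)"
  unfolding eigen_equation_def
proof
  fix v assume "v \<in> V"
  then have "c * (vdeg v * f v - (\<Sum>w\<in>V. adj v w * f w)) = c * (\<mu> * (vdeg v * f v))"
    using assms by (simp add: eigen_equation_def)
  then show "vdeg v * (c * f v) - (\<Sum>w\<in>V. adj v w * (c * f w)) = \<mu> * (vdeg v * (c * f v))"
    by (simp add: sum_distrib_left algebra_simps)
qed

lemma exists_unit_eigenfunction:
  assumes "laplacian_eigenvalue V E \<mu>"
  obtains f where "eigen_equation \<mu> f" "mass f = 1"
proof -
  obtain f v where f: "eigen_equation \<mu> f" "v \<in> V" "f v \<noteq> 0"
    using assms by (auto simp: laplacian_eigenvalue_iff)
  have "mass f > 0"
    using sq_le_mass[OF f(2), of f] f(3) by (smt (verit) zero_less_power2)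
  then have "mass (\<lambda>v. (1 / sqrt (mass f)) * f v) = 1"
    by (simp only: mass_scale) (simp add: power_divide)
  with eigen_equation_scale[OF f(1)] show thesis by (rule that)
qed

lemma finite_laplacian_eigenvalues: "finite {\<mu>. laplacian_eigenvalue V E \<mu>}"
proof (rule ccontr)
  assume "infinite {\<mu>. laplacian_eigenvalue V E \<mu>}"
  then obtain F where F: "finite F" "card F = Suc (card V)" "F \<subseteq> {\<mu>. laplacian_eigenvalue V E \<mu>}"
    using infinite_arbitrarily_large by blast
  have "\<exists>f. eigen_equation \<mu> f \<and> mass f = 1" if "\<mu> \<in> F" for \<mu>
    using exists_unit_eigenfunction F(3) that by blast
  then obtain u where u: "\<And>\<mu>. \<mu> \<in> F \<Longrightarrow> eigen_equation \<mu> (u \<mu>) \<and> mass (u \<mu>) = 1"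
    by metis
  have "orthonormal F u"
    unfolding orthonormal_def
  proof (intro ballI)
    fix \<mu> \<nu> assume "\<mu> \<in> F" "\<nu> \<in> F"
    then show "deg_inner (u \<mu>) (u \<nu>) = of_bool (\<mu> = \<nu>)"
      using u[of \<mu>] u[of \<nu>] eigen_orthogonal[of \<mu> "u \<mu>" \<nu> "u \<nu>"] by (cases "\<mu> = \<nu>") auto
  qed
  then show False
    using card_orthonormal_le[OF F(1)] F(2) by simp
qed

lemma laplacian_eigenvalue_le_lambda_max:
  "laplacian_eigenvalue V E \<mu> \<Longrightarrow> \<mu> \<le> lambda_max V E"
  unfolding lambda_max_def using finite_laplacian_eigenvalues by (intro Max_ge) auto

lemma rayleigh_bound:
  assumes "V \<noteq> {}"
  shows "energy g \<le> 2 * lambda_max V E * mass g" and "lambda_max V E \<ge> 0"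
proof -
  obtain f where f: "mass f = 1" "\<And>g. energy g \<le> energy f * mass g"
    using exists_energy_maximizer[OF assms] by blast
  have "\<exists>v\<in>V. f v \<noteq> 0"
    using f(1) by (rule contrapos_pp) (simp add: deg_inner_def)
  then have "laplacian_eigenvalue V E (energy f / 2)"
    using eigen_equation_if_maximizer[OF f] by (auto simp: laplacian_eigenvalue_iff)
  then have "energy f \<le> 2 * lambda_max V E"
    using laplacian_eigenvalue_le_lambda_max by force
  then have "energy f * mass g \<le> 2 * lambda_max V E * mass g"
    by (rule mult_right_mono) (rule mass_nonneg)
  with f(2)[of g] show "energy g \<le> 2 * lambda_max V E * mass g"
    by linarith
  show "lambda_max V E \<ge> 0"
    using \<open>energy f \<le> 2 * lambda_max V E\<close> energy_nonneg[of f] by linarith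
qed

section \<open>Colour classes as test functions\<close>

text \<open>Centring at the degree-weighted mean leaves the energy unchanged but lowers the mass;
  summed over the colour classes this produces the factor 1 - 1/k.\<close>

definition centred :: "('a \<Rightarrow> real) \<Rightarrow> 'a \<Rightarrow> real" where
  "centred f v = f v - deg_inner f (\<lambda>_. 1) / vol"

lemma vol_pos: "V \<noteq> {} \<Longrightarrow> vol > 0"
proof -
  assume "V \<noteq> {}"
  then obtain x where x: "x \<in> V" by blast
  have "vdeg x \<le> vol"
    unfolding vol_def using x finite_V vdeg_ge_1 by (intro member_le_sum) (auto intro: order.trans[OF zero_le_one])
  then show ?thesis using vdeg_ge_1[OF x] by linarith
qed

lemma energy_centred: "energy (centred f) = energy f"
  by (simp add: energy_form_def centred_def)

lemma mass_centred:
  assumes "vol > 0"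
  shows "mass (centred f) = mass f - (deg_inner f (\<lambda>_. 1))\<^sup>2 / vol"
proof -
  define a where "a = deg_inner f (\<lambda>_. 1) / vol"
  have "deg_inner f (\<lambda>_. a) = a * deg_inner f (\<lambda>_. 1)" "mass (\<lambda>_. a) = a\<^sup>2 * vol"
    by (simp_all add: deg_inner_def vol_def sum_distrib_left sum_distrib_right power2_eq_square ac_simps)
  then show ?thesis
    using assms unfolding centred_def a_def[symmetric] mass_diff
    by (simp add: a_def power2_eq_square field_simps)
qed

lemma energy_colour_classes:
  assumes "\<And>v. v \<in> V \<Longrightarrow> c v \<in> I" and "finite I"
  shows "(\<Sum>i\<in>I. energy (\<lambda>v. of_bool (c v = i)))
           = 2 * (\<Sum>v\<in>V. vdeg v - real (card {w \<in> V. E v w \<and> c w = c v}))"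
proof -
  have pair: "(\<Sum>i\<in>I. (of_bool (c v = i) - of_bool (c w = i) :: real)\<^sup>2) = 2 * of_bool (c w \<noteq> c v)"
    if "v \<in> V" "w \<in> V" for v w :: 'a
  proof -
    have "(of_bool (c v = i) - of_bool (c w = i) :: real)\<^sup>2
            = of_bool (c w \<noteq> c v) * (of_bool (i = c v) + of_bool (i = c w))" for i
      by auto
    moreover have "I \<inter> {i. i = c v} = {c v}" "I \<inter> {i. i = c w} = {c w}"
      using assms that by auto
    ultimately show ?thesis
      using assms by (simp add: sum_distrib_left sum.distrib)
  qed
  have row: "(\<Sum>w\<in>V. adj v w * of_bool (c w \<noteq> c v)) = vdeg v - real (card {w \<in> V. E v w \<and> c w = c v})"
    for v
  proof -
    have "(\<Sum>w\<in>V. adj v w * of_bool (c w \<noteq> c v)) = (\<Sum>w\<in>V. adj v w - of_bool (E v w \<and> c w = c v))"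
      by (intro sum.cong) (auto simp: adj_def)
    then show ?thesis
      using finite_V by (simp add: sum_subtractf vdeg_eq_sum_adj Int_def)
  qed
  have "(\<Sum>i\<in>I. energy (\<lambda>v. of_bool (c v = i)))
          = (\<Sum>v\<in>V. \<Sum>w\<in>V. adj v w * (\<Sum>i\<in>I. (of_bool (c v = i) - of_bool (c w = i))\<^sup>2))"
    unfolding energy_form_def
    by (simp add: sum_distrib_left sum.swap[of _ I] power2_eq_square mult.assoc)
  also have "\<dots> = 2 * (\<Sum>v\<in>V. \<Sum>w\<in>V. adj v w * of_bool (c w \<noteq> c v))"
    by (simp add: pair sum_distrib_left ac_simps cong: sum.cong)
  finally show ?thesis by (simp add: row)
qed

lemma mass_colour_classes:
  assumes "\<And>v. v \<in> V \<Longrightarrow> c v \<in> I" and "finite I" and "I \<noteq> {}" and "V \<noteq> {}"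
  shows "(\<Sum>i\<in>I. mass (centred (\<lambda>v. of_bool (c v = i)))) \<le> vol - vol / card I"
proof -
  define w where "w i = deg_inner (\<lambda>v. of_bool (c v = i)) (\<lambda>_. 1)" for i
  have "vol > 0" "card I > 0"
    using vol_pos assms by (auto simp: card_gt_0_iff)
  have "mass (\<lambda>v. of_bool (c v = i)) = w i" for i
    unfolding w_def deg_inner_def by (intro sum.cong) auto
  then have mass_eq: "(\<Sum>i\<in>I. mass (centred (\<lambda>v. of_bool (c v = i)))) = (\<Sum>i\<in>I. w i) - (\<Sum>i\<in>I. (w i)\<^sup>2) / vol"
    by (simp add: mass_centred[OF \<open>vol > 0\<close>] w_def[symmetric] sum_subtractf sum_divide_distrib)
  have "(\<Sum>i\<in>I. w i) = (\<Sum>v\<in>V. vdeg v * (\<Sum>i\<in>I. of_bool (c v = i)))"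
    unfolding w_def deg_inner_def by (subst sum.swap) (simp add: sum_distrib_left)
  also have "\<dots> = vol"
  proof -
    have "I \<inter> {i. c v = i} = {c v}" if "v \<in> V" for v
      using assms(1) that by auto
    then show ?thesis using assms(2) by (simp add: vol_def)
  qed
  finally have sum_w: "(\<Sum>i\<in>I. w i) = vol" .
  then have "vol\<^sup>2 \<le> (\<Sum>i\<in>I. (w i)\<^sup>2) * card I"
    using sum_squared_le_sum_of_squares[of w I] by simp
  then have "vol / card I \<le> (\<Sum>i\<in>I. (w i)\<^sup>2) / vol"
    using \<open>vol > 0\<close> \<open>card I > 0\<close> by (simp add: field_simps power2_eq_square)
  then show ?thesis
    unfolding mass_eq sum_w by simp
qed

lemma improper_coloring_spectral_ineq:
  assumes "V \<noteq> {}" and "improper_coloring V E d k c"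
  shows "vol - real (card V) * real d \<le> lambda_max V E * (vol - vol / real k)"
proof -
  define I where "I = {1..k}"
  define f where "f i = centred (\<lambda>v. of_bool (c v = i))" for i
  have colours: "\<And>v. v \<in> V \<Longrightarrow> c v \<in> I"
    and few_same: "\<And>v. v \<in> V \<Longrightarrow> card {w \<in> V. E v w \<and> c w = c v} \<le> d"
    using assms(2) by (auto simp: improper_coloring_def I_def)
  have "I \<noteq> {}" using colours assms(1) by blast
  have "finite I" by (simp add: I_def)
  have "2 * (vol - real (card V) * real d) = 2 * (\<Sum>v\<in>V. vdeg v - real d)"
    by (simp add: vol_def sum_subtractf)
  also have "\<dots> \<le> 2 * (\<Sum>v\<in>V. vdeg v - real (card {w \<in> V. E v w \<and> c w = c v}))"
    using few_same by (intro mult_left_mono sum_mono) simp_all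
  also have "\<dots> = (\<Sum>i\<in>I. energy (f i))"
    by (simp add: f_def energy_centred energy_colour_classes[OF colours \<open>finite I\<close>])
  also have "\<dots> \<le> (\<Sum>i\<in>I. 2 * lambda_max V E * mass (f i))"
    by (intro sum_mono rayleigh_bound(1)[OF assms(1)])
  also have "\<dots> = 2 * lambda_max V E * (\<Sum>i\<in>I. mass (f i))"
    by (simp add: sum_distrib_left)
  also have "\<dots> \<le> 2 * lambda_max V E * (vol - vol / real k)"
    using mass_colour_classes[OF colours \<open>finite I\<close> \<open>I \<noteq> {}\<close> assms(1)] rayleigh_bound(2)[OF assms(1)]
    by (intro mult_left_mono) (simp_all add: f_def I_def)
  finally show ?thesis by simp
qed

lemma improper_chromatic_lower_bound:
  assumes "V \<noteq> {}"
  shows "lambda_max V E / (lambda_max V E - 1 + real d / avg_deg V E) \<le> improper_chromatic V E d"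
proof -
  define k where "k = improper_chromatic V E d"
  obtain c where c: "improper_coloring V E d k c"
    using improper_coloring_improper_chromatic[OF simple] by (auto simp: k_def)
  have "k \<ge> 1"
    using c assms by (force simp: improper_coloring_def)
  have n: "real (card V) > 0"
    using assms finite_V by (simp add: card_gt_0_iff)
  have avg: "avg_deg V E = vol / card V"
    by (simp add: avg_deg_def vol_def vdeg_def)
  have vol: "vol = card V * avg_deg V E"
    using n by (simp add: avg)
  have "card V * (avg_deg V E - d) \<le> card V * (lambda_max V E * (avg_deg V E - avg_deg V E / k))"
    using improper_coloring_spectral_ineq[OF assms c] unfolding vol by (simp add: algebra_simps)
  then have "avg_deg V E - d \<le> lambda_max V E * (avg_deg V E - avg_deg V E / k)"
    using n by simp
  moreover have "avg_deg V E > 0"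
    using vol_pos[OF assms] n by (simp add: avg)
  ultimately show ?thesis
    using le_colours_if_spectral_ineq \<open>k \<ge> 1\<close> rayleigh_bound(2)[OF assms] by (simp add: k_def)
qed

end

section \<open>Complete graphs\<close>

definition complete_edge :: "nat \<Rightarrow> nat \<Rightarrow> nat \<Rightarrow> bool" where
  "complete_edge n v w \<longleftrightarrow> v < n \<and> w < n \<and> v \<noteq> w"

lemma gdeg_complete: "v < n \<Longrightarrow> gdeg {..<n} (complete_edge n) v = n - 1"
proof -
  assume "v < n"
  then have "neighbours {..<n} (complete_edge n) v = {..<n} - {v}"
    by (auto simp: neighbours_def complete_edge_def)
  with \<open>v < n\<close> show ?thesis by (simp add: gdeg_def)
qed

lemma simple_graph_complete: "simple_graph {..<n} (complete_edge n)"
  by (auto simp: simple_graph_def complete_edge_def)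

lemma has_edge_complete: "n \<ge> 2 \<Longrightarrow> has_edge {..<n} (complete_edge n)"
  unfolding has_edge_def complete_edge_def by (rule bexI[of _ 0], rule bexI[of _ 1]) auto

lemma no_isolated_complete: "n \<ge> 2 \<Longrightarrow> no_isolated {..<n} (complete_edge n)"
  by (simp add: no_isolated_def gdeg_complete)

lemma norm_laplacian_complete:
  assumes "v < n"
  shows "norm_laplacian {..<n} (complete_edge n) f v = f v - ((\<Sum>w<n. f w) - f v) / (real n - 1)"
proof -
  have "(\<Sum>w<n. (if complete_edge n v w then 1 else 0) * f w) = (\<Sum>w\<in>{..<n} - {v}. f w)"
    by (rule sum.mono_neutral_cong_right) (auto simp: complete_edge_def assms)
  also have "\<dots> = (\<Sum>w<n. f w) - f v"
    using assms by (simp add: sum_diff1)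
  finally show ?thesis
    using assms by (simp add: norm_laplacian_def gdeg_complete)
qed

lemma laplacian_eigenvalue_complete:
  assumes "n \<ge> 2"
  shows "laplacian_eigenvalue {..<n} (complete_edge n) \<mu> \<longleftrightarrow> \<mu> = 0 \<or> \<mu> = real n / (real n - 1)"
proof
  have "real n - 1 > 0" using assms by simp
  assume "laplacian_eigenvalue {..<n} (complete_edge n) \<mu>"
  then obtain f u where u: "u < n" "f u \<noteq> 0"
    and eq: "\<And>v. v < n \<Longrightarrow> f v - ((\<Sum>w<n. f w) - f v) / (real n - 1) = \<mu> * f v"
    by (auto simp: laplacian_eigenvalue_def norm_laplacian_complete)
  define S where "S = (\<Sum>w<n. f w)"
  have "\<mu> * S = (\<Sum>v<n. f v - (S - f v) / (real n - 1))"
    using eq by (simp add: S_def sum_distrib_left)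
  also have "\<dots> = 0"
    using \<open>real n - 1 > 0\<close>
    by (simp add: S_def sum_subtractf sum_divide_distrib[symmetric] sum_distrib_left field_simps)
  finally consider "\<mu> = 0" | "S = 0" by auto
  then show "\<mu> = 0 \<or> \<mu> = real n / (real n - 1)"
  proof cases
    case 2
    then have "f u * (real n / (real n - 1)) = f u * \<mu>"
      using eq[OF u(1)] \<open>real n - 1 > 0\<close> by (simp add: S_def field_simps)
    with u(2) have "\<mu> = real n / (real n - 1)"
      by (metis mult_left_cancel)
    then show ?thesis ..
  qed simp
next
  assume "\<mu> = 0 \<or> \<mu> = real n / (real n - 1)"
  then show "laplacian_eigenvalue {..<n} (complete_edge n) \<mu>"
  proof
    assume "\<mu> = 0"
    then show ?thesis
      using assms
      by (auto simp: laplacian_eigenvalue_def norm_laplacian_complete intro!: exI[of _ "\<lambda>_. 1"] exI[of _ "0::nat"])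
  next
    assume \<mu>: "\<mu> = real n / (real n - 1)"
    define f where "f v = (of_bool (v = 0) - of_bool (v = 1) :: real)" for v :: nat
    have "(\<Sum>w<n. f w) = 0"
      using assms by (simp add: f_def sum_subtractf of_bool_def)
    then show ?thesis
      using assms unfolding laplacian_eigenvalue_def \<mu>
      by (intro exI[of _ f]) (auto simp: norm_laplacian_complete field_simps f_def)
  qed
qed

lemma lambda_max_complete:
  assumes "n \<ge> 2"
  shows "lambda_max {..<n} (complete_edge n) = real n / (real n - 1)"
proof -
  have "{\<mu>. laplacian_eigenvalue {..<n} (complete_edge n) \<mu>} = {0, real n / (real n - 1)}"
    using laplacian_eigenvalue_complete[OF assms] by auto
  moreover have "0 \<le> real n / (real n - 1)" using assms by simp
  ultimately show ?thesis by (simp add: lambda_max_def max_def)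
qed

lemma spectral_bound_complete:
  assumes "n \<ge> 2"
  shows "lambda_max {..<n} (complete_edge n)
           / (lambda_max {..<n} (complete_edge n) - 1 + real 0 / avg_deg {..<n} (complete_edge n)) = n"
proof -
  have "real n / (real n - 1) - 1 = 1 / (real n - 1)"
    using assms by (simp add: field_simps)
  then show ?thesis
    using assms by (simp add: lambda_max_complete)
qed

lemma improper_chromatic_complete:
  assumes "n \<ge> 2"
  shows "improper_chromatic {..<n} (complete_edge n) 0 = n"
proof -
  interpret nonisolated_graph "{..<n}" "complete_edge n"
    using assms by unfold_locales (simp_all add: simple_graph_complete no_isolated_complete)
  have "{..<n} \<noteq> {}" using assms by (simp add: lessThan_empty_iff)
  have "improper_chromatic {..<n} (complete_edge n) 0 \<le> n"
    using improper_chromatic_le_card[OF simple] by simp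
  moreover have "real n \<le> improper_chromatic {..<n} (complete_edge n) 0"
    using improper_chromatic_lower_bound[OF \<open>{..<n} \<noteq> {}\<close>, of 0] spectral_bound_complete[OF assms]
    by simp
  ultimately show ?thesis by simp
qed

lemma complete_graph_attains_bound:
  assumes "n \<ge> 2"
  shows "real (improper_chromatic {..<n} (complete_edge n) 0)
           = lambda_max {..<n} (complete_edge n)
             / (lambda_max {..<n} (complete_edge n) - 1 + real 0 / avg_deg {..<n} (complete_edge n))"
  using improper_chromatic_complete[OF assms] spectral_bound_complete[OF assms] by simp

theorem mainTheorem13:
  fixes V :: "'a set" and E :: "'a \<Rightarrow> 'a \<Rightarrow> bool" and d :: nat
  assumes "simple_graph V E" and "has_edge V E" and "no_isolated V E"
  shows "real (improper_chromatic V E d)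
           \<ge> lambda_max V E / (lambda_max V E - 1 + real d / avg_deg V E)
       \<and> (\<exists>(V' :: nat set) E' (d' :: nat). simple_graph V' E' \<and> has_edge V' E' \<and> no_isolated V' E'
            \<and> real (improper_chromatic V' E' d')
                = lambda_max V' E' / (lambda_max V' E' - 1 + real d' / avg_deg V' E'))"
proof
  interpret nonisolated_graph V E using assms(1,3) by unfold_locales
  have "V \<noteq> {}" using assms(2) by (auto simp: has_edge_def)
  then show "real (improper_chromatic V E d)
               \<ge> lambda_max V E / (lambda_max V E - 1 + real d / avg_deg V E)"
    by (rule improper_chromatic_lower_bound)
  show "\<exists>(V' :: nat set) E' (d' :: nat). simple_graph V' E' \<and> has_edge V' E' \<and> no_isolated V' E'
          \<and> real (improper_chromatic V' E' d')
              = lambda_max V' E' / (lambda_max V' E' - 1 + real d' / avg_deg V' E')"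
    using simple_graph_complete has_edge_complete[of 2] no_isolated_complete[of 2]
      complete_graph_attains_bound[of 2] by blast
qed

end
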